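(* Let $(V,\le,\preccurlyeq)$ be a mixed lattice vector space such that $(V,\le)$ is a lattice (a Riesz space). If $\tau$ is a locally symmetric-solid vector topology on $V$, then $\tau$ is a locally solid Riesz space topology on $(V,\le)$.
   Context: A mixed lattice vector space $(V,\le,\preccurlyeq)$ is a real vector space $V$ with two partial orderings $\le$ (initial order) and $\preccurlyeq$ (specific order), each making $V$ a partially ordered vector space, with positive cones $V_p=\{x:0\le x\}$, $V_{sp}=\{x:0\preccurlyeq x\}$, such that: (1) for all $x,y$ the elements $x\curlyvee y=\min\{w: w\succcurlyeq x,\ w\ge y\}$ and $x\curlywedge y=\max\{w: w\preccurlyeq x,\ w\le y\}$ exist (min/max with respect to $\le$); (2) $x\preccurlyeq y$ implies $x\le y$; (3) $x\curlyvee y, x\curlywedge y\in V_{sp}$ whenever $x,y\in V_{sp}$. Notation: $x^u=0\curlyvee x$, $x^l=0\curlyvee(-x)$, $s(x)=x^u+x^l$. A set $A$ is symmetric-solid if $x\in A$ and $s(y)\le s(x)$ imply $y\in A$; a vector topology is locally symmetric-solid if it has a base at zero of symmetric-solid sets. A locally solid Riesz space topology on $(V,\le)$ is a vector topology with a base at zero of sets $S$ such that $y\in S$ and $|x|\le|y|$ imply $x\in S$, where $|\cdot|$ is the lattice absolute value of $(V,\le)$. *)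

theory Defs
  imports "HOL-Analysis.Analysis"
begin

text \<open>Orders are given as explicit relations on a real vector space, since V carries two orders.\<close>

definition is_least :: "('a \<Rightarrow> 'a \<Rightarrow> bool) \<Rightarrow> 'a set \<Rightarrow> 'a \<Rightarrow> bool" where
  "is_least le S m \<longleftrightarrow> m \<in> S \<and> (\<forall>w\<in>S. le m w)"

definition is_greatest :: "('a \<Rightarrow> 'a \<Rightarrow> bool) \<Rightarrow> 'a set \<Rightarrow> 'a \<Rightarrow> bool" where
  "is_greatest le S m \<longleftrightarrow> m \<in> S \<and> (\<forall>w\<in>S. le w m)"

definition ordered_vs :: "('a::real_vector \<Rightarrow> 'a \<Rightarrow> bool) \<Rightarrow> bool" where
  "ordered_vs le \<longleftrightarrow>
     (\<forall>x. le x x) \<and>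
     (\<forall>x y. le x y \<and> le y x \<longrightarrow> x = y) \<and>
     (\<forall>x y z. le x y \<and> le y z \<longrightarrow> le x z) \<and>
     (\<forall>x y z. le x y \<longrightarrow> le (x + z) (y + z)) \<and>
     (\<forall>x y (c::real). le x y \<and> 0 \<le> c \<longrightarrow> le (c *\<^sub>R x) (c *\<^sub>R y))"

definition mixed_upper :: "('a \<Rightarrow> 'a \<Rightarrow> bool) \<Rightarrow> ('a \<Rightarrow> 'a \<Rightarrow> bool) \<Rightarrow> 'a \<Rightarrow> 'a \<Rightarrow> 'a" where
  "mixed_upper le sle x y = (THE m. is_least le {w. sle x w \<and> le y w} m)"

definition mixed_lower :: "('a \<Rightarrow> 'a \<Rightarrow> bool) \<Rightarrow> ('a \<Rightarrow> 'a \<Rightarrow> bool) \<Rightarrow> 'a \<Rightarrow> 'a \<Rightarrow> 'a" where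
  "mixed_lower le sle x y = (THE m. is_greatest le {w. sle w x \<and> le w y} m)"

definition mixed_lattice_vs ::
  "('a::real_vector \<Rightarrow> 'a \<Rightarrow> bool) \<Rightarrow> ('a \<Rightarrow> 'a \<Rightarrow> bool) \<Rightarrow> bool" where
  "mixed_lattice_vs le sle \<longleftrightarrow>
     ordered_vs le \<and> ordered_vs sle \<and>
     (\<forall>x y. \<exists>m. is_least le {w. sle x w \<and> le y w} m) \<and>
     (\<forall>x y. \<exists>m. is_greatest le {w. sle w x \<and> le w y} m) \<and>
     (\<forall>x y. sle x y \<longrightarrow> le x y) \<and>
     (\<forall>x y. sle 0 x \<and> sle 0 y \<longrightarrow>
        sle 0 (mixed_upper le sle x y) \<and> sle 0 (mixed_lower le sle x y))"

definition upart :: "('a::real_vector \<Rightarrow> 'a \<Rightarrow> bool) \<Rightarrow> ('a \<Rightarrow> 'a \<Rightarrow> bool) \<Rightarrow> 'a \<Rightarrow> 'a" where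
  "upart le sle x = mixed_upper le sle 0 x"

definition lpart :: "('a::real_vector \<Rightarrow> 'a \<Rightarrow> bool) \<Rightarrow> ('a \<Rightarrow> 'a \<Rightarrow> bool) \<Rightarrow> 'a \<Rightarrow> 'a" where
  "lpart le sle x = mixed_upper le sle 0 (- x)"

definition sabs :: "('a::real_vector \<Rightarrow> 'a \<Rightarrow> bool) \<Rightarrow> ('a \<Rightarrow> 'a \<Rightarrow> bool) \<Rightarrow> 'a \<Rightarrow> 'a" where
  "sabs le sle x = upart le sle x + lpart le sle x"

definition symmetric_solid :: "('a::real_vector \<Rightarrow> 'a \<Rightarrow> bool) \<Rightarrow> ('a \<Rightarrow> 'a \<Rightarrow> bool) \<Rightarrow> 'a set \<Rightarrow> bool" where
  "symmetric_solid le sle A \<longleftrightarrow>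
     (\<forall>x y. x \<in> A \<and> le (sabs le sle y) (sabs le sle x) \<longrightarrow> y \<in> A)"

text \<open>(V,\<le>) is a lattice: every pair has a least upper bound w.r.t. le
  (greatest lower bounds then exist in an ordered vector space, but we require both).\<close>
definition lattice_ord :: "('a \<Rightarrow> 'a \<Rightarrow> bool) \<Rightarrow> bool" where
  "lattice_ord le \<longleftrightarrow>
     (\<forall>x y. \<exists>m. is_least le {w. le x w \<and> le y w} m) \<and>
     (\<forall>x y. \<exists>m. is_greatest le {w. le w x \<and> le w y} m)"

definition lsup :: "('a \<Rightarrow> 'a \<Rightarrow> bool) \<Rightarrow> 'a \<Rightarrow> 'a \<Rightarrow> 'a" where
  "lsup le x y = (THE m. is_least le {w. le x w \<and> le y w} m)"

definition labs :: "('a::real_vector \<Rightarrow> 'a \<Rightarrow> bool) \<Rightarrow> 'a \<Rightarrow> 'a" where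
  "labs le x = lsup le x (- x)"

definition solid :: "('a::real_vector \<Rightarrow> 'a \<Rightarrow> bool) \<Rightarrow> 'a set \<Rightarrow> bool" where
  "solid le S \<longleftrightarrow> (\<forall>x y. y \<in> S \<and> le (labs le x) (labs le y) \<longrightarrow> x \<in> S)"

definition vector_topology :: "'a::real_vector topology \<Rightarrow> bool" where
  "vector_topology T \<longleftrightarrow>
     topspace T = UNIV \<and>
     continuous_map (prod_topology T T) T (\<lambda>(x, y). x + y) \<and>
     continuous_map (prod_topology euclideanreal T) T (\<lambda>(c, x). c *\<^sub>R x)"

definition nhd0 :: "'a::real_vector topology \<Rightarrow> 'a set \<Rightarrow> bool" where
  "nhd0 T U \<longleftrightarrow> (\<exists>W. openin T W \<and> 0 \<in> W \<and> W \<subseteq> U)"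

definition has_base_at_zero :: "'a::real_vector topology \<Rightarrow> ('a set \<Rightarrow> bool) \<Rightarrow> bool" where
  "has_base_at_zero T P \<longleftrightarrow> (\<forall>U. nhd0 T U \<longrightarrow> (\<exists>S. P S \<and> nhd0 T S \<and> S \<subseteq> U))"

definition locally_symmetric_solid ::
  "('a::real_vector \<Rightarrow> 'a \<Rightarrow> bool) \<Rightarrow> ('a \<Rightarrow> 'a \<Rightarrow> bool) \<Rightarrow> 'a topology \<Rightarrow> bool" where
  "locally_symmetric_solid le sle T \<longleftrightarrow>
     vector_topology T \<and> has_base_at_zero T (symmetric_solid le sle)"

definition locally_solid_riesz_topology ::
  "('a::real_vector \<Rightarrow> 'a \<Rightarrow> bool) \<Rightarrow> 'a topology \<Rightarrow> bool" where
  "locally_solid_riesz_topology le T \<longleftrightarrow>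
     vector_topology T \<and> has_base_at_zero T (solid le)"

end

theory Submission
  imports Defs
begin

text \<open>If \<open>|z| \<le> |x|\<close> then \<open>z\<close> and \<open>-z\<close> are bounded above by \<open>s(x)\<close>, which is
  \<open>\<succcurlyeq> 0\<close>; minimality of \<open>z\<^sup>u\<close> and \<open>z\<^sup>l\<close> then gives \<open>s(z) \<le> 2 s(x) = s(2x)\<close>.
  Hence for a symmetric-solid neighbourhood \<open>S\<close> of zero, every \<open>x\<close> with \<open>2x \<in> S\<close> lies in
  the largest solid subset of \<open>S\<close>, which is therefore again a neighbourhood of zero.\<close>

lemma ordered_vs_refl: "ordered_vs le \<Longrightarrow> le x x"
  and ordered_vs_antisym: "ordered_vs le \<Longrightarrow> le x y \<Longrightarrow> le y x \<Longrightarrow> x = y"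
  and ordered_vs_trans: "ordered_vs le \<Longrightarrow> le x y \<Longrightarrow> le y z \<Longrightarrow> le x z"
  and ordered_vs_add_right: "ordered_vs le \<Longrightarrow> le x y \<Longrightarrow> le (x + z) (y + z)"
  and ordered_vs_scaleR: "ordered_vs le \<Longrightarrow> le x y \<Longrightarrow> 0 \<le> c \<Longrightarrow> le (c *\<^sub>R x) (c *\<^sub>R y)"
  unfolding ordered_vs_def by blast+

lemma ordered_vs_add_mono:
  assumes "ordered_vs le" "le a b" "le c d"
  shows "le (a + c) (b + d)"
proof -
  have "le (a + c) (b + c)" "le (c + b) (d + b)"
    using assms by (simp_all add: ordered_vs_add_right)
  then show ?thesis
    using ordered_vs_trans[OF assms(1)] by (simp add: add.commute)
qed

lemma ordered_vs_add_nonneg: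
  "ordered_vs le \<Longrightarrow> le 0 a \<Longrightarrow> le 0 b \<Longrightarrow> le 0 (a + b)"
  using ordered_vs_add_mono[of le 0 a 0 b] by simp

lemma ordered_vs_scaleR_nonneg:
  "ordered_vs le \<Longrightarrow> le 0 x \<Longrightarrow> 0 \<le> c \<Longrightarrow> le 0 (c *\<^sub>R x)"
  using ordered_vs_scaleR[of le 0 x c] by simp

lemma the_is_least_eq:
  assumes "ordered_vs le" "is_least le S m"
  shows "(THE m. is_least le S m) = m"
  using assms ordered_vs_antisym[OF assms(1)] unfolding is_least_def by blast

locale mixed_lattice =
  fixes le sle :: "'a::real_vector \<Rightarrow> 'a \<Rightarrow> bool"
  assumes mixed_lattice_vs: "mixed_lattice_vs le sle"
begin

lemma ordered_le: "ordered_vs le"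
  and ordered_sle: "ordered_vs sle"
  and sle_imp_le: "sle x y \<Longrightarrow> le x y"
  using mixed_lattice_vs unfolding mixed_lattice_vs_def by blast+

lemma mixed_upper_is_least: "is_least le {w. sle x w \<and> le y w} (mixed_upper le sle x y)"
proof -
  obtain m where "is_least le {w. sle x w \<and> le y w} m"
    using mixed_lattice_vs unfolding mixed_lattice_vs_def by blast
  then show ?thesis
    unfolding mixed_upper_def by (simp add: the_is_least_eq[OF ordered_le])
qed

lemma upart_nonneg: "sle 0 (upart le sle x)"
  and upart_ge: "le x (upart le sle x)"
  and upart_least: "sle 0 w \<Longrightarrow> le x w \<Longrightarrow> le (upart le sle x) w"
  using mixed_upper_is_least[of 0 x] unfolding upart_def is_least_def by auto

lemma lpart_eq_upart_uminus: "lpart le sle x = upart le sle (- x)"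
  unfolding lpart_def upart_def ..

lemma upart_scaleR:
  assumes "0 < c"
  shows "upart le sle (c *\<^sub>R x) = c *\<^sub>R upart le sle x"
proof (rule ordered_vs_antisym[OF ordered_le])
  have "sle 0 (c *\<^sub>R upart le sle x)" "le (c *\<^sub>R x) (c *\<^sub>R upart le sle x)"
    using assms upart_nonneg upart_ge
    by (simp_all add: ordered_vs_scaleR_nonneg[OF ordered_sle] ordered_vs_scaleR[OF ordered_le])
  then show "le (upart le sle (c *\<^sub>R x)) (c *\<^sub>R upart le sle x)"
    by (rule upart_least)
  have "sle 0 (inverse c *\<^sub>R upart le sle (c *\<^sub>R x))"
    using assms upart_nonneg by (simp add: ordered_vs_scaleR_nonneg[OF ordered_sle])
  moreover have "le (inverse c *\<^sub>R (c *\<^sub>R x)) (inverse c *\<^sub>R upart le sle (c *\<^sub>R x))"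
    using assms by (intro ordered_vs_scaleR[OF ordered_le upart_ge]) simp
  ultimately have "le (upart le sle x) (inverse c *\<^sub>R upart le sle (c *\<^sub>R x))"
    using assms by (simp add: upart_least)
  then have "le (c *\<^sub>R upart le sle x) (c *\<^sub>R (inverse c *\<^sub>R upart le sle (c *\<^sub>R x)))"
    using assms by (intro ordered_vs_scaleR[OF ordered_le]) simp_all
  then show "le (c *\<^sub>R upart le sle x) (upart le sle (c *\<^sub>R x))"
    using assms by simp
qed

lemma sabs_scaleR: "0 < c \<Longrightarrow> sabs le sle (c *\<^sub>R x) = c *\<^sub>R sabs le sle x"
  unfolding sabs_def lpart_eq_upart_uminus
  by (metis scaleR_minus_right upart_scaleR scaleR_add_right)

lemma sabs_add_self: "sabs le sle (x + x) = sabs le sle x + sabs le sle x"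
  using sabs_scaleR[of 2 x] by (simp add: scaleR_2)

lemma sabs_nonneg: "sle 0 (sabs le sle x)"
  unfolding sabs_def lpart_eq_upart_uminus
  by (intro ordered_vs_add_nonneg[OF ordered_sle] upart_nonneg)

lemma sabs_ge: "le x (sabs le sle x)"
  using ordered_vs_add_mono[OF ordered_le upart_ge[of x] sle_imp_le[OF upart_nonneg[of "- x"]]]
  unfolding sabs_def lpart_eq_upart_uminus by simp

lemma sabs_ge_uminus: "le (- x) (sabs le sle x)"
  using ordered_vs_add_mono[OF ordered_le sle_imp_le[OF upart_nonneg[of x]] upart_ge[of "- x"]]
  unfolding sabs_def lpart_eq_upart_uminus by simp

lemma sabs_le_double_bound:
  assumes "sle 0 m" "le z m" "le (- z) m"
  shows "le (sabs le sle z) (m + m)"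
  unfolding sabs_def lpart_eq_upart_uminus
  using assms by (intro ordered_vs_add_mono[OF ordered_le] upart_least)

end

locale riesz_mixed_lattice = mixed_lattice +
  assumes lattice_ord: "lattice_ord le"
begin

lemma labs_is_least: "is_least le {w. le x w \<and> le (- x) w} (labs le x)"
proof -
  obtain m where "is_least le {w. le x w \<and> le (- x) w} m"
    using lattice_ord unfolding lattice_ord_def by blast
  then show ?thesis
    unfolding labs_def lsup_def by (simp add: the_is_least_eq[OF ordered_le])
qed

lemma labs_ge: "le x (labs le x)"
  and labs_ge_uminus: "le (- x) (labs le x)"
  and labs_least: "le x w \<Longrightarrow> le (- x) w \<Longrightarrow> le (labs le x) w"
  using labs_is_least[of x] unfolding is_least_def by auto

lemma labs_le_sabs: "le (labs le x) (sabs le sle x)"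
  by (intro labs_least sabs_ge sabs_ge_uminus)

lemma sabs_le_sabs_double_if_labs_le:
  assumes "le (labs le z) (labs le x)"
  shows "le (sabs le sle z) (sabs le sle (x + x))"
proof -
  have "le (labs le z) (sabs le sle x)"
    using ordered_vs_trans[OF ordered_le assms labs_le_sabs] .
  then have "le z (sabs le sle x)" "le (- z) (sabs le sle x)"
    using ordered_vs_trans[OF ordered_le] labs_ge labs_ge_uminus by blast+
  then show ?thesis
    unfolding sabs_add_self by (intro sabs_le_double_bound sabs_nonneg)
qed

end

definition solid_core :: "('a::real_vector \<Rightarrow> 'a \<Rightarrow> bool) \<Rightarrow> 'a set \<Rightarrow> 'a set" where
  "solid_core le S = {x. \<forall>z. le (labs le z) (labs le x) \<longrightarrow> z \<in> S}"

lemma solid_solid_core: "ordered_vs le \<Longrightarrow> solid le (solid_core le S)"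
  unfolding solid_def solid_core_def by (blast intro: ordered_vs_trans)

lemma solid_core_subset: "ordered_vs le \<Longrightarrow> solid_core le S \<subseteq> S"
  unfolding solid_core_def by (blast intro: ordered_vs_refl)

lemma (in riesz_mixed_lattice) halves_subset_solid_core:
  assumes "symmetric_solid le sle S"
  shows "{x. x + x \<in> S} \<subseteq> solid_core le S"
  using assms sabs_le_sabs_double_if_labs_le
  unfolding symmetric_solid_def solid_core_def by blast

lemma nhd0_vimage:
  assumes "continuous_map T T f" "f 0 = 0" "topspace T = UNIV" "nhd0 T S"
  shows "nhd0 T (f -` S)"
proof -
  obtain W where W: "openin T W" "0 \<in> W" "W \<subseteq> S"
    using assms(4) unfolding nhd0_def by blast
  have "openin T {x \<in> topspace T. f x \<in> W}"
    using openin_continuous_map_preimage[OF assms(1) W(1)] .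
  moreover have "{x \<in> topspace T. f x \<in> W} \<subseteq> f -` S"
    using W(3) by blast
  moreover have "0 \<in> {x \<in> topspace T. f x \<in> W}"
    using assms(2,3) W(2) by simp
  ultimately show ?thesis
    unfolding nhd0_def by blast
qed

lemma vector_topology_continuous_double:
  assumes "vector_topology T"
  shows "continuous_map T T (\<lambda>x. x + x)"
proof -
  have "continuous_map T (prod_topology T T) (\<lambda>x. (x, x))"
    by (intro continuous_map_pairedI continuous_map_id[unfolded id_def])
  with assms show ?thesis
    unfolding vector_topology_def by (auto dest: continuous_map_compose simp: o_def)
qed

theorem theorem4p9:
  fixes le sle :: "'a::real_vector \<Rightarrow> 'a \<Rightarrow> bool" and T :: "'a topology"
  assumes "mixed_lattice_vs le sle"
    and "lattice_ord le"
    and "locally_symmetric_solid le sle T"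
  shows "locally_solid_riesz_topology le T"
proof -
  interpret riesz_mixed_lattice le sle
    using assms(1,2) by unfold_locales
  have vt: "vector_topology T" and base: "has_base_at_zero T (symmetric_solid le sle)"
    using assms(3) unfolding locally_symmetric_solid_def by auto
  have "\<exists>W. solid le W \<and> nhd0 T W \<and> W \<subseteq> U" if "nhd0 T U" for U
  proof -
    obtain S where S: "symmetric_solid le sle S" "nhd0 T S" "S \<subseteq> U"
      using base \<open>nhd0 T U\<close> unfolding has_base_at_zero_def by blast
    have "nhd0 T ((\<lambda>x. x + x) -` S)"
      using vt S(2) by (intro nhd0_vimage vector_topology_continuous_double)
        (simp_all add: vector_topology_def)
    then have "nhd0 T (solid_core le S)"
      using halves_subset_solid_core[OF S(1)] unfolding nhd0_def vimage_def by blast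
    then show ?thesis
      using solid_solid_core solid_core_subset S(3) ordered_le by blast
  qed
  with vt show ?thesis
    unfolding locally_solid_riesz_topology_def has_base_at_zero_def by blast
qed

end
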